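(* For positive integers $p,q,r,s,t,u$, the transition maps satisfy: (1) $T^{p,q,r}_{s,t,u}:\Lambda^{p,q,r}\to\Lambda^{s,t,u}$ is well-defined; (2) $T^{p,q,r}_{s,t,u}$ is order-preserving; (3) $T^{s,t,u}_{p,q,r}\circ T^{p,q,r}_{s,t,u}\le\mathrm{id}_{\Lambda^{p,q,r}}$ (pointwise); (4) $T^{s,t,u}_{p,q,r}\circ T^{p,q,r}_{s,t,u}=\mathrm{id}_{\Lambda^{p,q,r}}$ if $p\le s$, $q\le t$ and $r\le u$; (5) $(T^{p,q,r}_{s,t,u})^{-1}(0)=\{0\}$ if each of the pairs $(p,s),(q,t),(r,u)$ lies in $\{(1,1)\}\cup(\mathbb{N}_{\ge2})^2$.
   Context: $\mathbb{N}=\{0,1,2,\dots\}$. For positive integers $p,q,r$, $\Lambda^{p,q,r}=\langle a,b,c\mid pa+qb=rc\rangle$ is the quotient of the free commutative monoid $\mathbb{N}a\oplus\mathbb{N}b\oplus\mathbb{N}c$ by the congruence generated by $\lambda+pa+qb\sim\lambda+rc$; it is ordered by $\lambda\le\mu$ iff $\lambda+\nu=\mu$ for some $\nu\in\Lambda^{p,q,r}$. The transition function $\tau^p_q:\mathbb{N}\to\mathbb{N}$ is $\tau^p_q(mp+n)=mq+\min\{n,q-1\}$ ($m\in\mathbb{N}$, $0\le n<p$). The transition map $T^{p,q,r}_{s,t,u}:\Lambda^{p,q,r}\to\Lambda^{s,t,u}$ is $T^{p,q,r}_{s,t,u}(ma+nb+kc)=\tau^p_s(m)a+\tau^q_t(n)b+\tau^r_u(k)c$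 for $m,n,k\in\mathbb{N}$. For maps $f,g$ into a poset, $f\le g$ means $f(x)\le g(x)$ for all $x$. *)

theory Defs
  imports Main
begin

text \<open>Elements of the free commutative monoid Na + Nb + Nc are represented by
  triples (m, n, k) of naturals, standing for m a + n b + k c.  The monoid
  Lambda^{p,q,r} is the quotient of this free monoid by the congruence lam_eq p q r;
  we work with representatives and the congruence explicitly.\<close>

type_synonym triple = "nat \<times> nat \<times> nat"

definition add3 :: "triple \<Rightarrow> triple \<Rightarrow> triple" where
  "add3 x y = (fst x + fst y, fst (snd x) + fst (snd y), snd (snd x) + snd (snd y))"

definition lam_step :: "nat \<Rightarrow> nat \<Rightarrow> nat \<Rightarrow> triple rel" where
  "lam_step p q r = {(add3 l (p, q, 0), add3 l (0, 0, r)) | l. True}"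

text \<open>The congruence generated: reflexive-symmetric-transitive closure
  (the generating relation is already translation invariant).\<close>
definition lam_eq :: "nat \<Rightarrow> nat \<Rightarrow> nat \<Rightarrow> triple \<Rightarrow> triple \<Rightarrow> bool" where
  "lam_eq p q r x y \<longleftrightarrow> (x, y) \<in> (lam_step p q r \<union> (lam_step p q r)\<inverse>)\<^sup>*"

definition lam_le :: "nat \<Rightarrow> nat \<Rightarrow> nat \<Rightarrow> triple \<Rightarrow> triple \<Rightarrow> bool" where
  "lam_le p q r x y \<longleftrightarrow> (\<exists>v. lam_eq p q r (add3 x v) y)"

definition tau :: "nat \<Rightarrow> nat \<Rightarrow> nat \<Rightarrow> nat" where
  "tau p q x = (x div p) * q + min (x mod p) (q - 1)"

definition trans_map :: "nat \<Rightarrow> nat \<Rightarrow> nat \<Rightarrow> nat \<Rightarrow> nat \<Rightarrow> nat \<Rightarrow> triple \<Rightarrow> triple" where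
  "trans_map p q r s t u x =
     (tau p s (fst x), tau q t (fst (snd x)), tau r u (snd (snd x)))"

definition good_pair :: "nat \<Rightarrow> nat \<Rightarrow> bool" where
  "good_pair p s \<longleftrightarrow> (p = 1 \<and> s = 1) \<or> (2 \<le> p \<and> 2 \<le> s)"

end

theory Submission
  imports Defs
begin

text \<open>Since \<open>\<tau>\<^sup>p\<^sub>s(n + p) = \<tau>\<^sup>p\<^sub>s(n) + s\<close>, the transition map sends each generating step
  \<open>\<lambda> + p a + q b \<sim> \<lambda> + r c\<close> to the generating step \<open>\<mu> + s a + t b \<sim> \<mu> + u c\<close>, so it respects
  the congruence. Everything else reduces to coordinatewise facts about \<open>\<tau>\<close>: it is monotone,
  \<open>\<tau>\<^sup>s\<^sub>p \<circ> \<tau>\<^sup>p\<^sub>s \<le> id\<close> with equality when \<open>p \<le> s\<close>, and coordinatewise \<open>\<le>\<close> on representatives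
  implies \<open>\<le>\<close> in the monoid. For (5), the class of \<open>0\<close> is \<open>{0}\<close>, because no generating step
  applies to \<open>0\<close>, and for good pairs \<open>\<tau>\<^sup>p\<^sub>s\<close> vanishes only at \<open>0\<close>.\<close>

lemma tau_add_self: "0 < p \<Longrightarrow> tau p s (x + p) = tau p s x + s"
proof -
  assume "0 < p"
  then have "(x + p) div p = x div p + 1" "(x + p) mod p = x mod p"
    using div_add_self2[of p x] by simp_all
  then show ?thesis by (simp add: tau_def algebra_simps)
qed

lemma mono_tau: "mono (tau p s)"
proof
  fix x y :: nat
  assume "x \<le> y"
  show "tau p s x \<le> tau p s y"
  proof (cases "x div p = y div p")
    case True
    then have "x mod p \<le> y mod p"
      by (metis \<open>x \<le> y\<close> diff_le_mono minus_div_mult_eq_mod)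
    then show ?thesis using True by (simp add: tau_def)
  next
    case False
    then have "x div p + 1 \<le> y div p"
      using div_le_mono[OF \<open>x \<le> y\<close>, of p] by linarith
    then have "(x div p + 1) * s \<le> (y div p) * s" by (rule mult_right_mono) simp
    moreover have "tau p s x \<le> (x div p) * s + (s - 1)" by (simp add: tau_def)
    moreover have "(y div p) * s \<le> tau p s y" by (simp add: tau_def)
    ultimately show ?thesis by (simp add: algebra_simps)
  qed
qed

lemma tau_tau_eq:
  assumes "0 < p" "p \<le> s"
  shows "tau s p (tau p s x) = x"
proof -
  have "x mod p < p" using assms by simp
  then have "x mod p \<le> s - 1" "x mod p \<le> p - 1" using assms by arith+
  then have "tau s p (tau p s x) = tau s p ((x div p) * s + x mod p)"
    by (simp add: tau_def min_absorb1)
  also have "\<dots> = (x div p) * p + x mod p"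
    using \<open>x mod p < p\<close> \<open>x mod p \<le> p - 1\<close> assms by (simp add: tau_def min_absorb1)
  also have "\<dots> = x" by simp
  finally show ?thesis .
qed

lemma tau_tau_le:
  assumes "0 < p" "0 < s"
  shows "tau s p (tau p s x) \<le> x"
proof -
  have "min (x mod p) (s - 1) < s" using \<open>0 < s\<close> by simp
  then have "tau s p (tau p s x) = (x div p) * p + min (min (x mod p) (s - 1)) (p - 1)"
    by (simp add: tau_def)
  also have "\<dots> \<le> (x div p) * p + x mod p" by (rule add_left_mono) simp
  also have "\<dots> = x" by simp
  finally show ?thesis .
qed

lemma tau_eq_0_iff: "good_pair p s \<Longrightarrow> tau p s x = 0 \<longleftrightarrow> x = 0"
  by (auto simp: good_pair_def tau_def min_def split: if_splits)

lemma lam_eq_refl [simp]: "lam_eq p q r x x"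
  by (simp add: lam_eq_def)

lemma lam_le_lam_eq_trans: "lam_le p q r x y \<Longrightarrow> lam_eq p q r y z \<Longrightarrow> lam_le p q r x z"
  unfolding lam_le_def lam_eq_def by (meson rtrancl_trans)

lemma lam_le_if_le_components:
  assumes "fst x \<le> fst y" "fst (snd x) \<le> fst (snd y)" "snd (snd x) \<le> snd (snd y)"
  shows "lam_le p q r x y"
proof -
  have "add3 x (fst y - fst x, fst (snd y) - fst (snd x), snd (snd y) - snd (snd x)) = y"
    using assms by (cases x; cases y) (simp add: add3_def)
  then show ?thesis unfolding lam_le_def by (metis lam_eq_refl)
qed

text \<open>Trades every full multiple of \<open>r c\<close> for \<open>p a + q b\<close>: an invariant of the congruence,
  though not a complete one.\<close>
definition trade_c :: "nat \<Rightarrow> nat \<Rightarrow> nat \<Rightarrow> triple \<Rightarrow> triple" where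
  "trade_c p q r x = (fst x + (snd (snd x) div r) * p, fst (snd x) + (snd (snd x) div r) * q,
                      snd (snd x) mod r)"

lemma trade_c_lam_eq:
  assumes "0 < r" "lam_eq p q r x y"
  shows "trade_c p q r x = trade_c p q r y"
proof -
  have "(x, y) \<in> (lam_step p q r \<union> (lam_step p q r)\<inverse>)\<^sup>*"
    using assms(2) by (simp add: lam_eq_def)
  then show ?thesis
  proof (induction rule: rtrancl_induct)
    case (step y z)
    then show ?case
      using assms(1) by (auto simp: lam_step_def add3_def trade_c_def div_add_self2 ring_distribs)
  qed simp
qed

lemma lam_eq_0_iff:
  assumes "0 < p \<or> 0 < q" "0 < r"
  shows "lam_eq p q r x (0, 0, 0) \<longleftrightarrow> x = (0, 0, 0)"
proof
  obtain a b c where x: "x = (a, b, c)" by (cases x)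
  assume "lam_eq p q r x (0, 0, 0)"
  then have "trade_c p q r x = (0, 0, 0)"
    using trade_c_lam_eq[OF \<open>0 < r\<close>] by (simp add: trade_c_def)
  then have "a + (c div r) * p = 0" "b + (c div r) * q = 0" "c mod r = 0"
    by (simp_all add: trade_c_def x)
  moreover from this have "c div r = 0" using assms(1) by auto
  ultimately show "x = (0, 0, 0)"
    using div_mult_mod_eq[of c r] x by simp
qed simp

lemma trans_map_add_left_step:
  "0 < p \<Longrightarrow> 0 < q \<Longrightarrow>
    trans_map p q r s t u (add3 l (p, q, 0)) = add3 (trans_map p q r s t u l) (s, t, 0)"
  by (simp add: trans_map_def add3_def tau_add_self)

lemma trans_map_add_right_step:
  "0 < r \<Longrightarrow> trans_map p q r s t u (add3 l (0, 0, r)) = add3 (trans_map p q r s t u l) (0, 0, u)"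
  by (simp add: trans_map_def add3_def tau_add_self)

lemma trans_map_lam_step:
  assumes "0 < p" "0 < q" "0 < r" "(x, y) \<in> lam_step p q r"
  shows "(trans_map p q r s t u x, trans_map p q r s t u y) \<in> lam_step s t u"
proof -
  from assms(4) obtain l where "x = add3 l (p, q, 0)" "y = add3 l (0, 0, r)"
    unfolding lam_step_def by blast
  then have "trans_map p q r s t u x = add3 (trans_map p q r s t u l) (s, t, 0)"
    and "trans_map p q r s t u y = add3 (trans_map p q r s t u l) (0, 0, u)"
    using assms(1-3) by (simp_all add: trans_map_add_left_step trans_map_add_right_step)
  then show ?thesis unfolding lam_step_def by blast
qed

lemma trans_map_lam_eq:
  assumes "0 < p" "0 < q" "0 < r" "lam_eq p q r x y"
  shows "lam_eq s t u (trans_map p q r s t u x) (trans_map p q r s t u y)"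
proof -
  have "(x, y) \<in> (lam_step p q r \<union> (lam_step p q r)\<inverse>)\<^sup>*"
    using assms(4) by (simp add: lam_eq_def)
  then show ?thesis
  proof (induction rule: rtrancl_induct)
    case (step y z)
    then have "(trans_map p q r s t u y, trans_map p q r s t u z) \<in> lam_step s t u \<union> (lam_step s t u)\<inverse>"
      using trans_map_lam_step[OF assms(1-3)] by blast
    then show ?case
      using step.IH unfolding lam_eq_def by (rule rtrancl_into_rtrancl[rotated])
  qed simp
qed

lemma trans_map_lam_le:
  assumes "0 < p" "0 < q" "0 < r" "lam_le p q r x y"
  shows "lam_le s t u (trans_map p q r s t u x) (trans_map p q r s t u y)"
proof -
  from assms(4) obtain v where v: "lam_eq p q r (add3 x v) y"
    unfolding lam_le_def by blast
  have "lam_le s t u (trans_map p q r s t u x) (trans_map p q r s t u (add3 x v))"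
    by (rule lam_le_if_le_components)
       (simp_all add: trans_map_def add3_def monoD[OF mono_tau])
  then show ?thesis
    using lam_le_lam_eq_trans trans_map_lam_eq[OF assms(1-3) v] by blast
qed

lemma trans_map_trans_map_lam_le:
  assumes "0 < p" "0 < q" "0 < r" "0 < s" "0 < t" "0 < u"
  shows "lam_le p q r (trans_map s t u p q r (trans_map p q r s t u x)) x"
  by (rule lam_le_if_le_components) (simp_all add: trans_map_def tau_tau_le assms)

lemma trans_map_trans_map_eq:
  assumes "0 < p" "0 < q" "0 < r" "p \<le> s" "q \<le> t" "r \<le> u"
  shows "trans_map s t u p q r (trans_map p q r s t u x) = x"
  using assms by (cases x) (simp add: trans_map_def tau_tau_eq)

lemma trans_map_eq_0_iff:
  assumes "good_pair p s" "good_pair q t" "good_pair r u"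
  shows "trans_map p q r s t u x = (0, 0, 0) \<longleftrightarrow> x = (0, 0, 0)"
  using assms by (cases x) (simp add: trans_map_def tau_eq_0_iff)

theorem proposition3p3:
  fixes p q r s t u :: nat
  assumes "0 < p" "0 < q" "0 < r" "0 < s" "0 < t" "0 < u"
  shows
    "(\<forall>x y. lam_eq p q r x y \<longrightarrow>
        lam_eq s t u (trans_map p q r s t u x) (trans_map p q r s t u y))
     \<and> (\<forall>x y. lam_le p q r x y \<longrightarrow>
        lam_le s t u (trans_map p q r s t u x) (trans_map p q r s t u y))
     \<and> (\<forall>x. lam_le p q r (trans_map s t u p q r (trans_map p q r s t u x)) x)
     \<and> (p \<le> s \<and> q \<le> t \<and> r \<le> u \<longrightarrow>
        (\<forall>x. lam_eq p q r (trans_map s t u p q r (trans_map p q r s t u x)) x))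
     \<and> (good_pair p s \<and> good_pair q t \<and> good_pair r u \<longrightarrow>
        (\<forall>x. lam_eq s t u (trans_map p q r s t u x) (0, 0, 0) \<longleftrightarrow> lam_eq p q r x (0, 0, 0)))"
  using assms
  by (simp add: trans_map_lam_eq trans_map_lam_le trans_map_trans_map_lam_le
      trans_map_trans_map_eq lam_eq_0_iff trans_map_eq_0_iff)

end
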